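(* The $\mathfrak{gl}_{1|1}[t]$-module $\mathcal V^S$ is cyclic, generated by $v_1^{\otimes n}=v_1\otimes\cdots\otimes v_1$.
   Context: $\mathbb{C}^{1|1}$ has basis $v_1$ (even), $v_2$ (odd), $|1|=\bar0,|2|=\bar1$; $\mathfrak{gl}_{1|1}$ has basis $e_{ij}$ of parity $|i|+|j|$, acting by $e_{ij}v_r=\delta_{jr}v_i$. $\mathfrak{gl}_{1|1}[t]=\mathfrak{gl}_{1|1}\otimes\mathbb{C}[t]$ with basis $e_{ij}[r]=e_{ij}\otimes t^r$ and pointwise supercommutator. $\mathcal V=(\mathbb{C}^{1|1})^{\otimes n}\otimes\mathbb{C}[z_1,\dots,z_n]$ is a $\mathfrak{gl}_{1|1}[t]$-module via $e_{ij}[r](p\,w_1\otimes\cdots\otimes w_n)=p\sum_{s=1}^n(-1)^{(|w_1|+\cdots+|w_{s-1}|)(|i|+|j|)}z_s^r\,w_1\otimes\cdots\otimes e_{ij}w_s\otimes\cdots\otimes w_n$ for $p\in\mathbb{C}[\boldsymbol z]$ and homogeneous $w_s$. The standard $\mathfrak S_n$-action is $s_i:\boldsymbol f(\dots,z_i,z_{i+1},\dots)\mapsto P^{(i,i+1)}\boldsymbol f(\dots,z_{i+1},z_i,\dots)$ with $P^{(i,i+1)}$ the graded flip of factors $i,i+1$; $\mathcal V^S$ is its invariant subspace, which is a $\mathfrak{gl}_{1|1}[t]$-submodule. *)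

theory Defs
  imports Complex_Main
begin

text \<open>Coordinate model of \<open>\<V> = (\<complex>^{1|1})^{\<otimes>n} \<otimes> \<complex>[z_1..z_n]\<close>.
  Basis index of \<open>\<complex>^{1|1}\<close>: \<open>False\<close> = \<open>v_1\<close> (even), \<open>True\<close> = \<open>v_2\<close> (odd);
  so the parity of index \<open>b\<close> is \<open>b\<close> itself.  A pure tensor
  \<open>v_{w_1} \<otimes> ... \<otimes> v_{w_n}\<close> is a list \<open>w\<close> of length n; a monomial
  \<open>z_1^{m 0} ... z_n^{m (n-1)}\<close> is an exponent function \<open>m\<close> vanishing at k >= n
  (variable \<open>z_{k+1}\<close> has index k).  An element of \<open>\<V>\<close> is a finitely
  supported coefficient function on pairs (w, m).\<close>

type_synonym vec = "bool list \<times> (nat \<Rightarrow> nat) \<Rightarrow> complex"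

definition Vsp :: "nat \<Rightarrow> vec set" where
  "Vsp n = {f. finite {x. f x \<noteq> 0} \<and>
     (\<forall>w m. f (w, m) \<noteq> 0 \<longrightarrow> length w = n \<and> (\<forall>k\<ge>n. m k = 0))}"

text \<open>Action of \<open>e_{ij}[r]\<close> (indices \<open>i j\<close> as booleans, parity of \<open>e_{ij}\<close> is \<open>i \<noteq> j\<close>):
  on a basis vector it replaces, at each position s with letter j, the letter by i,
  multiplies by \<open>z_s^r\<close> and by the Koszul sign
  \<open>(-1)^{(|w_1|+...+|w_{s-1}|)(|i|+|j|)}\<close>.  Below is the coefficient form.\<close>

definition e_act :: "nat \<Rightarrow> bool \<Rightarrow> bool \<Rightarrow> nat \<Rightarrow> vec \<Rightarrow> vec" where
  "e_act n i j r f = (\<lambda>(w, m). \<Sum>s<n.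
      if length w = n \<and> w ! s = i \<and> r \<le> m s
      then (-1) ^ (card {t. t < s \<and> w ! t} * (if i \<noteq> j then 1 else 0))
           * f (w[s := j], m(s := m s - r))
      else 0)"

definition swap_act :: "nat \<Rightarrow> vec \<Rightarrow> vec" where
  "swap_act k f = (\<lambda>(w, m).
      (if w ! k \<and> w ! Suc k then -1 else 1)
      * f (w[k := w ! Suc k, Suc k := w ! k], m(k := m (Suc k), Suc k := m k)))"

definition VS :: "nat \<Rightarrow> vec set" where
  "VS n = {f \<in> Vsp n. \<forall>k. Suc k < n \<longrightarrow> swap_act k f = f}"

definition vone :: "nat \<Rightarrow> vec" where
  "vone n = (\<lambda>x. if x = (replicate n False, (\<lambda>_. 0)) then 1 else 0)"

inductive_set gen_submod :: "nat \<Rightarrow> vec \<Rightarrow> vec set" for n :: nat and v :: vec where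
  base: "v \<in> gen_submod n v"
| act: "f \<in> gen_submod n v \<Longrightarrow> e_act n i j r f \<in> gen_submod n v"
| add: "f \<in> gen_submod n v \<Longrightarrow> g \<in> gen_submod n v \<Longrightarrow> (\<lambda>x. f x + g x) \<in> gen_submod n v"
| smult: "f \<in> gen_submod n v \<Longrightarrow> (\<lambda>x. c * f x) \<in> gen_submod n v"

end

(*
  Every e_ij[r] commutes with the graded flips, so the submodule generated by the symmetric vector
  v_1^(x)n lies in V^S.

  Conversely, the S_n-orbits of basis vectors are indexed by the multiset of (letter, exponent)
  pairs of their tensor factors, and a symmetric vector is determined, up to sign, on an orbit by
  its value at the sorted representative.  At a representative in the support the odd factors
  carry pairwise distinct exponents, since the flip of two equal odd factors acts by -1.  For such
  a representative c with odd exponents r_1, ..., r_k, applying e_21[r_1] ... e_21[r_k] to v_1^(x)n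
  and then e_11[a] for the nonzero even exponents a of c, in decreasing order, gives a vector of the
  submodule that is nonzero at c and vanishes on every other orbit with at least as many
  nonconstant even factors as c.  Subtracting multiples of these vectors, by induction on the
  number of nonconstant even factors and on the number of orbits attaining it, reduces every
  symmetric vector to 0.
*)

theory Submission
  imports Defs "HOL-Library.Multiset" "HOL-Library.Product_Lexorder"
begin

section \<open>Symmetric vectors form a submodule\<close>

abbreviation swap_letters :: "nat \<Rightarrow> bool list \<Rightarrow> bool list" where
  "swap_letters k w \<equiv> w[k := w ! Suc k, Suc k := w ! k]"

abbreviation swap_exps :: "nat \<Rightarrow> (nat \<Rightarrow> nat) \<Rightarrow> nat \<Rightarrow> nat" where
  "swap_exps k m \<equiv> m(k := m (Suc k), Suc k := m k)"

definition flip_sign :: "bool list \<Rightarrow> nat \<Rightarrow> complex" where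
  "flip_sign w k = (if w ! k \<and> w ! Suc k then -1 else 1)"

lemma flip_sign_square: "flip_sign w k * flip_sign w k = 1"
  by (simp add: flip_sign_def)

lemma swap_act_apply: "swap_act k f (w, m) = flip_sign w k * f (swap_letters k w, swap_exps k m)"
  by (simp add: swap_act_def flip_sign_def)

lemma swap_letters_involutive: "Suc k < length w \<Longrightarrow> swap_letters k (swap_letters k w) = w"
  by (rule nth_equalityI) (auto simp: nth_list_update)

lemma swap_exps_involutive: "swap_exps k (swap_exps k m) = m"
  by (auto simp: fun_eq_iff)

lemma flip_sign_swap_letters: "Suc k < length w \<Longrightarrow> flip_sign (swap_letters k w) k = flip_sign w k"
  by (auto simp: flip_sign_def nth_list_update)

lemma VS_swap_invariant:
  assumes "f \<in> VS n" "Suc k < n"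
  shows "f (swap_letters k w, swap_exps k m) = flip_sign w k * f (w, m)"
proof -
  have "f (w, m) = flip_sign w k * f (swap_letters k w, swap_exps k m)"
    using assms swap_act_apply[of k f w m] by (simp add: VS_def)
  then show ?thesis
    by (metis flip_sign_square mult.assoc mult_1)
qed

definition odd_before :: "bool list \<Rightarrow> nat \<Rightarrow> nat" where
  "odd_before w s = card {t. t < s \<and> w ! t}"

lemma odd_before_Suc: "odd_before w (Suc s) = odd_before w s + (if w ! s then 1 else 0)"
proof -
  have "{t. t < Suc s \<and> w ! t} = {t. t < s \<and> w ! t} \<union> (if w ! s then {s} else {})"
    by (auto simp: less_Suc_eq)
  then show ?thesis
    by (auto simp: odd_before_def card_insert_if)
qed

lemma odd_before_swap_letters:
  assumes "Suc k < length w"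
  shows "odd_before (swap_letters k w) s =
    (if s = Suc k then odd_before w k + (if w ! Suc k then 1 else 0) else odd_before w s)"
proof (induction s)
  case 0
  then show ?case by (simp add: odd_before_def)
next
  case (Suc s)
  consider "s < k" | "s = k" | "s = Suc k" | "Suc k < s"
    by linarith
  then show ?case
    using Suc assms by cases (auto simp: odd_before_Suc nth_list_update)
qed

definition e_summand ::
    "nat \<Rightarrow> bool \<Rightarrow> bool \<Rightarrow> nat \<Rightarrow> vec \<Rightarrow> bool list \<Rightarrow> (nat \<Rightarrow> nat) \<Rightarrow> nat \<Rightarrow> complex" where
  "e_summand n i j r f w m s =
    (if length w = n \<and> w ! s = i \<and> r \<le> m s
     then (-1) ^ (odd_before w s * (if i \<noteq> j then 1 else 0)) * f (w[s := j], m(s := m s - r))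
     else 0)"

lemma e_act_apply: "e_act n i j r f (w, m) = (\<Sum>s<n. e_summand n i j r f w m s)"
  unfolding e_act_def e_summand_def odd_before_def by simp

lemma e_act_nonzeroE:
  assumes "e_act n i j r f (w, m) \<noteq> 0"
  obtains s where "s < n" "length w = n" "w ! s = i" "r \<le> m s" "f (w[s := j], m(s := m s - r)) \<noteq> 0"
proof -
  have "(\<Sum>s<n. e_summand n i j r f w m s) \<noteq> 0"
    using assms by (simp add: e_act_apply)
  then obtain s where "s < n" "e_summand n i j r f w m s \<noteq> 0"
    by (meson lessThan_iff sum.not_neutral_contains_not_neutral)
  then show thesis
    using that by (auto simp: e_summand_def split: if_splits)
qed

lemma sum_lessThan_split_pair:
  assumes "Suc k < n"
  shows "(\<Sum>s<n. F s) = F k + F (Suc k) + (\<Sum>s\<in>{..<n} - {k, Suc k}. F s)"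
proof -
  have "(\<Sum>s<n. F s) = F k + (\<Sum>s\<in>{..<n} - {k}. F s)"
    using assms by (intro sum.remove) auto
  also have "(\<Sum>s\<in>{..<n} - {k}. F s) = F (Suc k) + (\<Sum>s\<in>{..<n} - {k} - {Suc k}. F s)"
    using assms by (intro sum.remove) auto
  finally show ?thesis
    by (simp add: set_diff_eq add.assoc)
qed

context
  fixes n k :: nat and f :: vec and w :: "bool list" and m :: "nat \<Rightarrow> nat"
  assumes f: "f \<in> VS n" and k: "Suc k < n" and len: "length w = n"
begin

lemma e_summand_swap_away:
  assumes s: "s < n" "s \<noteq> k" "s \<noteq> Suc k"
  shows "flip_sign w k * e_summand n i j r f (swap_letters k w) (swap_exps k m) s
    = e_summand n i j r f w m s"
proof (cases "w ! s = i \<and> r \<le> m s")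
  case True
  let ?sign = "(-1) ^ (odd_before w s * (if i \<noteq> j then 1 else 0)) :: complex"
  have upd: "(swap_letters k w)[s := j] = swap_letters k (w[s := j])"
    "(swap_exps k m)(s := m s - r) = swap_exps k (m(s := m s - r))"
    using s by (auto simp: list_update_swap fun_eq_iff)
  have val: "f (swap_letters k (w[s := j]), swap_exps k (m(s := m s - r)))
      = flip_sign w k * f (w[s := j], m(s := m s - r))"
    using VS_swap_invariant[OF f k, of "w[s := j]" "m(s := m s - r)"] s
    by (metis flip_sign_def nth_list_update_neq)
  have fixed: "odd_before (swap_letters k w) s = odd_before w s"
    "swap_letters k w ! s = w ! s" "swap_exps k m s = m s" "length (swap_letters k w) = length w"
    using odd_before_swap_letters[of k w s] s len k by auto
  have "e_summand n i j r f (swap_letters k w) (swap_exps k m) s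
      = ?sign * (flip_sign w k * f (w[s := j], m(s := m s - r)))"
    unfolding e_summand_def fixed upd val using True len by simp
  moreover have "e_summand n i j r f w m s = ?sign * f (w[s := j], m(s := m s - r))"
    unfolding e_summand_def using True len by simp
  ultimately show ?thesis
    by (simp add: mult.left_commute[of "flip_sign w k"] mult.assoc[symmetric] flip_sign_square)
next
  case False
  then show ?thesis
    using s by (auto simp: e_summand_def)
qed

lemma e_summand_swap_at:
  "flip_sign w k * e_summand n i j r f (swap_letters k w) (swap_exps k m) k
    = e_summand n i j r f w m (Suc k)"
proof (cases "w ! Suc k = i \<and> r \<le> m (Suc k)")
  case True
  let ?par = "if i \<noteq> j then 1 else 0 :: nat"
  have upd: "(swap_letters k w)[k := j] = swap_letters k (w[Suc k := j])"
    "(swap_exps k m)(k := m (Suc k) - r) = swap_exps k (m(Suc k := m (Suc k) - r))"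
    using len k by (auto simp: list_update_swap fun_eq_iff)
  have val: "f (swap_letters k (w[Suc k := j]), swap_exps k (m(Suc k := m (Suc k) - r)))
      = flip_sign (w[Suc k := j]) k * f (w[Suc k := j], m(Suc k := m (Suc k) - r))"
    by (rule VS_swap_invariant[OF f k])
  have fixed: "odd_before (swap_letters k w) k = odd_before w k"
    "swap_letters k w ! k = w ! Suc k" "swap_exps k m k = m (Suc k)"
    "length (swap_letters k w) = length w"
    using odd_before_swap_letters[of k w k] len k by (auto simp: nth_list_update)
  \<comment> \<open>moving the odd letter past position \<open>k\<close> is paid for by the flip sign\<close>
  have sign: "flip_sign w k * flip_sign (w[Suc k := j]) k * (-1) ^ (odd_before w k * ?par)
      = (-1) ^ (odd_before w (Suc k) * ?par)"
    using True len k
    by (cases "w ! k"; cases i; cases j)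
      (simp_all add: odd_before_Suc flip_sign_def nth_list_update power_add)
  have "e_summand n i j r f (swap_letters k w) (swap_exps k m) k
      = (-1) ^ (odd_before w k * ?par)
        * (flip_sign (w[Suc k := j]) k * f (w[Suc k := j], m(Suc k := m (Suc k) - r)))"
    unfolding e_summand_def fixed upd val using True len by simp
  moreover have "e_summand n i j r f w m (Suc k)
      = (-1) ^ (odd_before w (Suc k) * ?par) * f (w[Suc k := j], m(Suc k := m (Suc k) - r))"
    unfolding e_summand_def using True len by simp
  ultimately show ?thesis
    using sign by (simp add: algebra_simps)
next
  case False
  then show ?thesis
    using len k by (auto simp: e_summand_def nth_list_update)
qed

end

lemma e_act_swap_commute:
  assumes f: "f \<in> VS n" and k: "Suc k < n"
  shows "swap_act k (e_act n i j r f) = e_act n i j r f"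
proof
  fix x :: "bool list \<times> (nat \<Rightarrow> nat)"
  obtain w m where x: "x = (w, m)"
    by (cases x)
  show "swap_act k (e_act n i j r f) x = e_act n i j r f x"
  proof (cases "length w = n")
    case False
    then show ?thesis
      by (simp add: x swap_act_apply e_act_apply e_summand_def)
  next
    case len: True
    let ?F = "e_summand n i j r f w m"
      and ?G = "e_summand n i j r f (swap_letters k w) (swap_exps k m)"
    have "flip_sign w k * ?F k = ?G (Suc k)"
      using e_summand_swap_at[OF f k, of "swap_letters k w" i j r "swap_exps k m"] len k
      by (simp only: length_list_update swap_letters_involutive swap_exps_involutive
          flip_sign_swap_letters)
    then have at_Suc: "flip_sign w k * ?G (Suc k) = ?F k"
      by (metis flip_sign_square mult.assoc mult_1)
    have "flip_sign w k * (\<Sum>s<n. ?G s) = (\<Sum>s<n. flip_sign w k * ?G s)"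
      by (simp add: sum_distrib_left)
    also have "\<dots> = flip_sign w k * ?G k + flip_sign w k * ?G (Suc k)
        + (\<Sum>s\<in>{..<n} - {k, Suc k}. flip_sign w k * ?G s)"
      by (rule sum_lessThan_split_pair[OF k])
    also have "\<dots> = ?F (Suc k) + ?F k + (\<Sum>s\<in>{..<n} - {k, Suc k}. ?F s)"
      using e_summand_swap_at[OF f k len] at_Suc e_summand_swap_away[OF f k len]
      by (intro arg_cong2[where f="(+)"] sum.cong) auto
    also have "\<dots> = (\<Sum>s<n. ?F s)"
      using sum_lessThan_split_pair[OF k, of ?F] by simp
    finally show ?thesis
      by (simp add: x swap_act_apply e_act_apply)
  qed
qed

lemma Vsp_e_act:
  assumes f: "f \<in> Vsp n"
  shows "e_act n i j r f \<in> Vsp n"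
proof -
  let ?raise = "\<lambda>s (y :: bool list \<times> (nat \<Rightarrow> nat)). ((fst y)[s := i], (snd y)(s := snd y s + r))"
  have supp: "{x. e_act n i j r f x \<noteq> 0} \<subseteq> (\<Union>s<n. ?raise s ` {y. f y \<noteq> 0})"
  proof
    fix x
    assume "x \<in> {x. e_act n i j r f x \<noteq> 0}"
    then obtain w m where x: "x = (w, m)" and nz: "e_act n i j r f (w, m) \<noteq> 0"
      by (cases x) auto
    obtain s where s: "s < n" "length w = n" "w ! s = i" "r \<le> m s"
      "f (w[s := j], m(s := m s - r)) \<noteq> 0"
      using nz by (rule e_act_nonzeroE)
    then have "x = ?raise s (w[s := j], m(s := m s - r))"
      by (auto simp: x fun_eq_iff) (metis list_update_id)+
    then show "x \<in> (\<Union>s<n. ?raise s ` {y. f y \<noteq> 0})"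
      using s by blast
  qed
  have "finite {x. f x \<noteq> 0}"
    using f by (simp add: Vsp_def)
  then have "finite {x. e_act n i j r f x \<noteq> 0}"
    by (intro finite_subset[OF supp]) auto
  moreover have "length w = n \<and> (\<forall>k\<ge>n. m k = 0)" if nz: "e_act n i j r f (w, m) \<noteq> 0" for w m
  proof -
    obtain s where s: "s < n" "length w = n" "w ! s = i" "r \<le> m s"
      "f (w[s := j], m(s := m s - r)) \<noteq> 0"
      using nz by (rule e_act_nonzeroE)
    then have "\<forall>k\<ge>n. (m(s := m s - r)) k = 0"
      using f unfolding Vsp_def by blast
    then show ?thesis
      using s by auto
  qed
  ultimately show ?thesis
    by (simp add: Vsp_def)
qed

lemma Vsp_add: "f \<in> Vsp n \<Longrightarrow> g \<in> Vsp n \<Longrightarrow> (\<lambda>x. f x + g x) \<in> Vsp n"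
proof -
  assume fg: "f \<in> Vsp n" "g \<in> Vsp n"
  have "{x. f x + g x \<noteq> 0} \<subseteq> {x. f x \<noteq> 0} \<union> {x. g x \<noteq> 0}"
    by auto
  then have "finite {x. f x + g x \<noteq> 0}"
    using fg by (auto simp: Vsp_def intro: finite_subset)
  moreover have "f (w, m) + g (w, m) \<noteq> 0 \<Longrightarrow> length w = n \<and> (\<forall>k\<ge>n. m k = 0)" for w m
  proof -
    assume "f (w, m) + g (w, m) \<noteq> 0"
    then have "f (w, m) \<noteq> 0 \<or> g (w, m) \<noteq> 0"
      by auto
    then show ?thesis
      using fg by (auto simp: Vsp_def)
  qed
  ultimately show ?thesis
    by (simp add: Vsp_def)
qed

lemma Vsp_smult: "f \<in> Vsp n \<Longrightarrow> (\<lambda>x. c * f x) \<in> Vsp n"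
proof -
  assume f: "f \<in> Vsp n"
  have "finite {x. c * f x \<noteq> 0}"
    using f by (auto simp: Vsp_def intro: finite_subset[of _ "{x. f x \<noteq> 0}"])
  then show ?thesis
    using f by (auto simp: Vsp_def)
qed

lemma swap_act_add: "swap_act k (\<lambda>x. f x + g x) = (\<lambda>x. swap_act k f x + swap_act k g x)"
  by (auto simp: swap_act_def fun_eq_iff distrib_left)

lemma swap_act_smult: "swap_act k (\<lambda>x. c * f x) = (\<lambda>x. c * swap_act k f x)"
  by (auto simp: swap_act_def fun_eq_iff)

lemma VS_e_act: "f \<in> VS n \<Longrightarrow> e_act n i j r f \<in> VS n"
  using e_act_swap_commute Vsp_e_act by (simp add: VS_def)

lemma VS_add: "f \<in> VS n \<Longrightarrow> g \<in> VS n \<Longrightarrow> (\<lambda>x. f x + g x) \<in> VS n"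
  by (simp add: VS_def Vsp_add swap_act_add)

lemma VS_smult: "f \<in> VS n \<Longrightarrow> (\<lambda>x. c * f x) \<in> VS n"
  by (simp add: VS_def Vsp_smult swap_act_smult)

lemma vone_VS: "vone n \<in> VS n"
proof -
  have "vone n \<in> Vsp n"
    by (auto simp: Vsp_def vone_def)
  moreover have "swap_act k (vone n) = vone n" if k: "Suc k < n" for k
  proof
    fix x :: "bool list \<times> (nat \<Rightarrow> nat)"
    obtain w m where x: "x = (w, m)"
      by (cases x)
    have swap_vac: "swap_letters k (replicate n False) = replicate n False"
      using k by (intro nth_equalityI) (auto simp: nth_list_update)
    have "swap_letters k w = replicate n False \<longleftrightarrow> w = replicate n False"
    proof
      assume swapped: "swap_letters k w = replicate n False"
      then have "length w = n"
        by (metis length_list_update length_replicate)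
      then show "w = replicate n False"
        using swap_letters_involutive[of k w] k swapped swap_vac by simp
    qed (simp add: swap_vac)
    moreover have "swap_exps k m = (\<lambda>_. 0) \<longleftrightarrow> m = (\<lambda>_. 0)"
      by (metis swap_exps_involutive fun_upd_idem_iff)
    moreover have "flip_sign (replicate n False) k = 1"
      using k by (simp add: flip_sign_def)
    ultimately show "swap_act k (vone n) x = vone n x"
      by (auto simp: x swap_act_apply vone_def)
  qed
  ultimately show ?thesis
    by (simp add: VS_def)
qed

lemma gen_submod_subset_VS: "gen_submod n (vone n) \<subseteq> VS n"
proof
  fix f
  assume "f \<in> gen_submod n (vone n)"
  then show "f \<in> VS n"
    by induction (auto intro: vone_VS VS_e_act VS_add VS_smult)
qed

section \<open>Symmetric vectors are determined on sorted basis vectors\<close>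

definition factor_list :: "nat \<Rightarrow> bool list \<times> (nat \<Rightarrow> nat) \<Rightarrow> (bool \<times> nat) list" where
  "factor_list n x = map (\<lambda>s. (fst x ! s, snd x s)) [0..<n]"

definition factor_mset :: "nat \<Rightarrow> bool list \<times> (nat \<Rightarrow> nat) \<Rightarrow> (bool \<times> nat) multiset" where
  "factor_mset n x = mset (factor_list n x)"

definition basis_index :: "nat \<Rightarrow> bool list \<times> (nat \<Rightarrow> nat) \<Rightarrow> bool" where
  "basis_index n x \<longleftrightarrow> length (fst x) = n \<and> (\<forall>k\<ge>n. snd x k = 0)"

definition sorted_index :: "nat \<Rightarrow> bool list \<times> (nat \<Rightarrow> nat) \<Rightarrow> bool" where
  "sorted_index n x \<longleftrightarrow> sorted (rev (factor_list n x))"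

lemma length_factor_list [simp]: "length (factor_list n x) = n"
  by (simp add: factor_list_def)

lemma nth_factor_list [simp]: "s < n \<Longrightarrow> factor_list n x ! s = (fst x ! s, snd x s)"
  by (simp add: factor_list_def)

lemma in_factor_mset: "s < n \<Longrightarrow> (w ! s, m s) \<in># factor_mset n (w, m)"
  by (simp add: factor_mset_def factor_list_def)

lemma factor_msetE:
  assumes "u \<in># factor_mset n (w, m)"
  obtains s where "s < n" "u = (w ! s, m s)"
  using assms by (auto simp: factor_mset_def factor_list_def)

lemma factor_mset_update:
  assumes "s < n" "length w = n"
  shows "factor_mset n (w[s := b], m(s := e))
    = add_mset (b, e) (factor_mset n (w, m) - {#(w ! s, m s)#})"
proof -
  have "factor_list n (w[s := b], m(s := e)) = (factor_list n (w, m))[s := (b, e)]"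
    using assms by (intro nth_equalityI) (auto simp: nth_list_update)
  then show ?thesis
    using assms by (simp add: factor_mset_def mset_update)
qed

lemma factor_mset_swap:
  assumes k: "Suc k < n" and len: "length w = n"
  shows "factor_mset n (swap_letters k w, swap_exps k m) = factor_mset n (w, m)"
proof -
  let ?l = "factor_list n (w, m)"
  have "factor_list n (swap_letters k w, swap_exps k m) = ?l[Suc k := ?l ! k, k := ?l ! Suc k]"
    using assms by (intro nth_equalityI) (auto simp: nth_list_update)
  then have "factor_mset n (swap_letters k w, swap_exps k m)
      = mset (?l[Suc k := ?l ! k, k := ?l ! Suc k])"
    by (simp only: factor_mset_def)
  also have "\<dots> = mset ?l"
    using k by (intro mset_swap) auto
  finally show ?thesis
    by (simp only: factor_mset_def)
qed

lemma Vsp_support_basis_index: "f \<in> Vsp n \<Longrightarrow> f x \<noteq> 0 \<Longrightarrow> basis_index n x"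
  by (cases x) (auto simp: Vsp_def basis_index_def)

lemma sorted_index_iff:
  "sorted_index n (w, m) \<longleftrightarrow> (\<forall>s. Suc s < n \<longrightarrow> (w ! Suc s, m (Suc s)) \<le> (w ! s, m s))"
  by (simp add: sorted_index_def sorted_rev_iff_nth_Suc)

lemma sorted_index_antimono:
  "sorted_index n (w, m) \<Longrightarrow> s \<le> t \<Longrightarrow> t < n \<Longrightarrow> (w ! t, m t) \<le> (w ! s, m s)"
  using sorted_rev_nth_mono[of "factor_list n (w, m)" s t] by (simp add: sorted_index_def)

lemma factor_list_inj:
  assumes "basis_index n x" "basis_index n y" "factor_list n x = factor_list n y"
  shows "x = y"
proof -
  obtain w m w' m' where xy: "x = (w, m)" "y = (w', m')"
    by (cases x, cases y)
  have agree: "w ! s = w' ! s \<and> m s = m' s" if "s < n" for s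
    using assms(3) nth_factor_list[OF that, of x] nth_factor_list[OF that, of y] by (simp add: xy)
  have "w = w'"
    using assms(1,2) agree by (auto simp: xy basis_index_def intro: nth_equalityI)
  moreover have "m s = m' s" for s
    using assms(1,2) agree[of s] by (cases "s < n") (auto simp: xy basis_index_def)
  ultimately show ?thesis
    by (auto simp: xy)
qed

lemma sorted_index_unique:
  assumes "basis_index n x" "basis_index n y" "sorted_index n x" "sorted_index n y"
    and "factor_mset n x = factor_mset n y"
  shows "x = y"
proof -
  have sorted_rev: "rev (factor_list n z) = sorted_list_of_multiset (factor_mset n z)"
    if "sorted_index n z" for z
  proof -
    have "rev (factor_list n z) = sort (rev (factor_list n z))"
      using that by (simp add: sorted_index_def sorted_sort_id)
    also have "\<dots> = sorted_list_of_multiset (factor_mset n z)"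
      by (metis factor_mset_def mset_rev sorted_list_of_multiset_mset)
    finally show ?thesis .
  qed
  have "rev (factor_list n x) = rev (factor_list n y)"
    using sorted_rev[OF assms(3)] sorted_rev[OF assms(4)] assms(5) by simp
  then have "factor_list n x = factor_list n y"
    by simp
  then show ?thesis
    using assms(1,2) by (rule factor_list_inj[rotated 2])
qed

lemma sorted_index_exists:
  obtains c where "basis_index n c" "sorted_index n c" "factor_mset n c = factor_mset n x"
proof -
  let ?l = "rev (sort (factor_list n x))"
  define c where "c = (map fst ?l, \<lambda>s. if s < n then snd (?l ! s) else 0)"
  have "factor_list n c = ?l"
    by (intro nth_equalityI) (auto simp: c_def)
  then have "sorted_index n c" "factor_mset n c = factor_mset n x"
    by (simp_all add: sorted_index_def factor_mset_def)
  moreover have "basis_index n c"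
    by (simp add: c_def basis_index_def)
  ultimately show thesis
    using that by blast
qed

definition odd_weight :: "nat \<Rightarrow> bool list \<times> (nat \<Rightarrow> nat) \<Rightarrow> nat" where
  "odd_weight n x = (\<Sum>s<n. s * (if fst x ! s then 1 else 0))"

definition exp_weight :: "nat \<Rightarrow> bool list \<times> (nat \<Rightarrow> nat) \<Rightarrow> nat" where
  "exp_weight n x = (\<Sum>s<n. s * snd x s)"

lemma weighted_sum_swap:
  fixes h h' :: "nat \<Rightarrow> nat"
  assumes k: "Suc k < n"
    and h': "\<forall>s<n. h' s = (if s = k then h (Suc k) else if s = Suc k then h k else h s)"
  shows "(\<Sum>s<n. s * h' s) + h (Suc k) = (\<Sum>s<n. s * h s) + h k"
proof -
  have "(\<Sum>s\<in>{..<n} - {k, Suc k}. s * h' s) = (\<Sum>s\<in>{..<n} - {k, Suc k}. s * h s)"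
    using h' by (intro sum.cong) auto
  then show ?thesis
    using sum_lessThan_split_pair[OF k, of "\<lambda>s. s * h' s"]
      sum_lessThan_split_pair[OF k, of "\<lambda>s. s * h s"] h' k
    by (simp add: algebra_simps)
qed

lemma swap_decreases_weights:
  assumes k: "Suc k < n" and len: "length w = n" and inv: "(w ! k, m k) < (w ! Suc k, m (Suc k))"
  shows "((swap_letters k w, swap_exps k m), (w, m)) \<in> measures [odd_weight n, exp_weight n]"
proof -
  have "odd_weight n (swap_letters k w, swap_exps k m) + (if w ! Suc k then 1 else 0)
      = odd_weight n (w, m) + (if w ! k then 1 else 0)"
    unfolding odd_weight_def fst_conv using k len
    by (intro weighted_sum_swap[where h="\<lambda>s. if w ! s then 1 else 0"]) (auto simp: nth_list_update)
  moreover have "exp_weight n (swap_letters k w, swap_exps k m) + m (Suc k)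
      = exp_weight n (w, m) + m k"
    unfolding exp_weight_def snd_conv using k by (intro weighted_sum_swap) auto
  ultimately show ?thesis
    using inv by (cases "w ! k"; cases "w ! Suc k") auto
qed

lemma VS_vanishes_on_factor_class:
  assumes f: "f \<in> VS n" and c: "basis_index n c" "sorted_index n c" "f c = 0"
  shows "basis_index n y \<Longrightarrow> factor_mset n y = factor_mset n c \<Longrightarrow> f y = 0"
proof (induction y rule: wf_induct[OF wf_measures[of "[odd_weight n, exp_weight n]"]])
  case (1 y)
  obtain w m where y: "y = (w, m)"
    by (cases y)
  show ?case
  proof (cases "sorted_index n y")
    case True
    then show ?thesis
      using sorted_index_unique[of n y c] 1 c by simp
  next
    case False
    then obtain k where k: "Suc k < n" and inv: "(w ! k, m k) < (w ! Suc k, m (Suc k))"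
      by (auto simp: y sorted_index_iff not_le)
    have len: "length w = n"
      using "1.prems" by (simp add: y basis_index_def)
    have "f (swap_letters k w, swap_exps k m) = 0"
    proof (rule "1.IH"[rule_format])
      show "((swap_letters k w, swap_exps k m), y) \<in> measures [odd_weight n, exp_weight n]"
        using swap_decreases_weights[OF k len inv] by (simp add: y)
      show "basis_index n (swap_letters k w, swap_exps k m)"
        using "1.prems" k by (auto simp: y basis_index_def)
      show "factor_mset n (swap_letters k w, swap_exps k m) = factor_mset n c"
        using factor_mset_swap[OF k len] "1.prems" by (simp add: y)
    qed
    then show ?thesis
      using VS_swap_invariant[OF f k, of w m] by (simp add: y flip_sign_def split: if_splits)
  qed
qed

section \<open>Canonical representatives of the support\<close>

definition canonical_shape :: "nat \<Rightarrow> nat \<Rightarrow> bool list \<times> (nat \<Rightarrow> nat) \<Rightarrow> bool" where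
  "canonical_shape n k c \<longleftrightarrow> basis_index n c \<and> k \<le> n \<and> (\<forall>s<n. fst c ! s \<longleftrightarrow> s < k)
     \<and> (\<forall>s t. s < t \<longrightarrow> t < k \<longrightarrow> snd c s \<noteq> snd c t)
     \<and> (\<forall>s t. k \<le> s \<longrightarrow> s \<le> t \<longrightarrow> t < n \<longrightarrow> snd c t \<le> snd c s)"

lemma sorted_index_odd_prefix:
  assumes sorted: "sorted_index n (w, m)" and len: "length w = n"
  obtains k where "k \<le> n" "\<And>s. s < n \<Longrightarrow> w ! s \<longleftrightarrow> s < k"
proof
  let ?k = "length (takeWhile id w)"
  show "?k \<le> n"
    using len length_takeWhile_le[of id w] by simp
  fix s
  assume s: "s < n"
  show "w ! s \<longleftrightarrow> s < ?k"
  proof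
    assume "w ! s"
    show "s < ?k"
    proof (rule ccontr)
      assume "\<not> s < ?k"
      then have "(w ! s, m s) \<le> (w ! ?k, m ?k)" and "\<not> w ! ?k"
        using sorted_index_antimono[OF sorted, of ?k s] s len nth_length_takeWhile[of id w] by auto
      then show False
        using \<open>w ! s\<close> by (simp add: less_eq_prod_def)
    qed
  next
    assume "s < ?k"
    then show "w ! s"
      using takeWhile_nth[of s id w] set_takeWhileD[of "w ! s" id w] nth_mem by fastforce
  qed
qed

lemma VS_adjacent_odd_exps_differ:
  assumes f: "f \<in> VS n" and nz: "f (w, m) \<noteq> 0" and s: "Suc s < n" "length w = n"
    and odd: "w ! s" "w ! Suc s"
  shows "m s \<noteq> m (Suc s)"
proof
  assume eq: "m s = m (Suc s)"
  have "swap_letters s w = w"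
    using odd s by (intro nth_equalityI) (auto simp: nth_list_update)
  moreover have "swap_exps s m = m"
    using eq by (auto simp: fun_eq_iff)
  ultimately have "f (w, m) = - f (w, m)"
    using VS_swap_invariant[OF f s(1), of w m] odd by (simp add: flip_sign_def)
  then show False
    using nz by simp
qed

lemma canonical_shape_of_sorted_support:
  assumes f: "f \<in> VS n" and c: "basis_index n c" "sorted_index n c" and nz: "f c \<noteq> 0"
  obtains k where "canonical_shape n k c"
proof -
  obtain w m where c_eq: "c = (w, m)"
    by (cases c)
  have len: "length w = n"
    using c by (simp add: c_eq basis_index_def)
  have anti: "\<And>s t. s \<le> t \<Longrightarrow> t < n \<Longrightarrow> (w ! t, m t) \<le> (w ! s, m s)"
    using sorted_index_antimono[of n w m] c(2) c_eq by blast
  obtain k where k: "k \<le> n" "\<And>s. s < n \<Longrightarrow> w ! s \<longleftrightarrow> s < k"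
    using sorted_index_odd_prefix[of n w m] c(2) len by (auto simp: c_eq)
  have "m s \<noteq> m t" if st: "s < t" "t < k" for s t
  proof
    assume eq: "m s = m t"
    have "m (Suc s) = m s"
      using anti[of "Suc s" t] anti[of s "Suc s"] st k eq by (auto simp: less_eq_prod_def)
    moreover have "m (Suc s) \<noteq> m s"
      using VS_adjacent_odd_exps_differ[OF f nz[unfolded c_eq], of s] st k len by auto
    ultimately show False
      by simp
  qed
  moreover have "m t \<le> m s" if "k \<le> s" "s \<le> t" "t < n" for s t
    using anti[of s t] k that by (auto simp: less_eq_prod_def)
  ultimately have "canonical_shape n k c"
    using c k by (simp add: canonical_shape_def c_eq)
  then show thesis
    by (rule that)
qed

section \<open>Leading vectors of canonical representatives\<close>

definition odd_chain :: "nat \<Rightarrow> nat list \<Rightarrow> vec" where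
  "odd_chain n rs = foldr (e_act n True False) rs (vone n)"

definition chain_factors :: "nat \<Rightarrow> nat list \<Rightarrow> (bool \<times> nat) multiset" where
  "chain_factors n rs = mset (map (Pair True) rs) + replicate_mset (n - length rs) (False, 0)"

definition chain_index :: "nat \<Rightarrow> nat \<Rightarrow> nat list \<Rightarrow> bool list \<times> (nat \<Rightarrow> nat)" where
  "chain_index n j rs = (map (\<lambda>s. j \<le> s \<and> s < j + length rs) [0..<n],
     \<lambda>s. if j \<le> s \<and> s < j + length rs then rs ! (s - j) else 0)"

lemma odd_chain_in_gen_submod: "odd_chain n rs \<in> gen_submod n (vone n)"
  by (induction rs) (simp_all add: odd_chain_def gen_submod.base gen_submod.act)

lemma odd_chain_Cons: "odd_chain n (r # rs) = e_act n True False r (odd_chain n rs)"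
  by (simp add: odd_chain_def)

lemma odd_chain_support:
  "length rs \<le> n \<Longrightarrow> odd_chain n rs x \<noteq> 0 \<Longrightarrow> factor_mset n x = chain_factors n rs"
proof (induction rs arbitrary: x)
  case Nil
  then have "x = (replicate n False, \<lambda>_. 0)"
    by (simp add: odd_chain_def vone_def split: if_splits)
  then have "factor_list n x = replicate n (False, 0)"
    by (intro nth_equalityI) auto
  then show ?case
    by (simp add: factor_mset_def chain_factors_def)
next
  case (Cons r rs)
  obtain w m where x: "x = (w, m)"
    by (cases x)
  obtain s where s: "s < n" "length w = n" "w ! s" "r \<le> m s"
    and nz: "odd_chain n rs (w[s := False], m(s := m s - r)) \<noteq> 0"
    using Cons.prems by (auto simp: odd_chain_Cons x elim: e_act_nonzeroE)
  have lowered: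
    "add_mset (False, m s - r) (factor_mset n (w, m) - {#(True, m s)#}) = chain_factors n rs"
    using Cons.IH[OF _ nz] Cons.prems factor_mset_update[OF s(1,2)] s(3) by simp
  then have "(False, m s - r) \<in># chain_factors n rs"
    by (metis union_single_eq_member)
  then have ms: "m s = r"
    using s(4) by (auto simp: chain_factors_def split: if_splits)
  have "(True, r) \<in># factor_mset n (w, m)"
    using in_factor_mset[OF s(1), of w m] s(3) ms by simp
  moreover have "n - length rs = Suc (n - length (r # rs))"
    using Cons.prems by simp
  ultimately show ?case
    using lowered ms by (simp add: x chain_factors_def) (metis add_mset_remove_trivial insert_DiffM)
qed

lemma chain_index_lower:
  assumes "chain_index n j (r # rs) = (w, m)" and "j < n"
  shows "(w[j := False], m(j := m j - r)) = chain_index n (Suc j) rs"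
proof -
  have "w[j := False] = fst (chain_index n (Suc j) rs)"
    using assms
    by (intro nth_equalityI) (auto simp: chain_index_def nth_list_update split: if_splits)
  moreover have "m(j := m j - r) = snd (chain_index n (Suc j) rs)"
  proof
    fix t
    have "j < t \<Longrightarrow> t - j = Suc (t - Suc j)"
      by simp
    then show "(m(j := m j - r)) t = snd (chain_index n (Suc j) rs) t"
      using assms by (cases "t = j") (auto simp: chain_index_def)
  qed
  ultimately show ?thesis
    by (simp add: prod_eq_iff)
qed

lemma odd_chain_at_chain_index:
  "distinct rs \<Longrightarrow> j + length rs \<le> n \<Longrightarrow> odd_chain n rs (chain_index n j rs) = 1"
proof (induction rs arbitrary: j)
  case Nil
  have "map (\<lambda>s. j \<le> s \<and> s < j) [0..<n] = replicate n False"
    by (intro nth_equalityI) auto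
  then have "chain_index n j [] = (replicate n False, \<lambda>_. 0)"
    by (simp add: chain_index_def fun_eq_iff)
  then show ?case
    by (simp add: odd_chain_def vone_def)
next
  case (Cons r rs)
  obtain w m where c: "chain_index n j (r # rs) = (w, m)"
    by (cases "chain_index n j (r # rs)")
  have jn: "j < n"
    using Cons.prems by simp
  have w: "length w = n" "\<And>s. s < n \<Longrightarrow> w ! s \<longleftrightarrow> j \<le> s \<and> s < j + Suc (length rs)"
    and mj: "m j = r"
    using c by (auto simp: chain_index_def)
  let ?F = "e_summand n True False r (odd_chain n rs) w m"
  have "?F j = 1"
  proof -
    have "odd_before w j = 0"
      using w jn by (auto simp: odd_before_def)
    then show ?thesis
      using Cons.IH[of "Suc j"] Cons.prems w jn mj chain_index_lower[OF c jn]
      by (simp add: e_summand_def)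
  qed
  \<comment> \<open>lowering any other odd factor leaves \<open>(True, r)\<close>, which is not a factor of the support of the
    shorter chain\<close>
  moreover have "?F s = 0" if s: "s < n" "s \<noteq> j" for s
  proof (rule ccontr)
    assume "?F s \<noteq> 0"
    then have "odd_chain n rs (w[s := False], m(s := m s - r)) \<noteq> 0"
      by (auto simp: e_summand_def split: if_splits)
    then have "factor_mset n (w[s := False], m(s := m s - r)) = chain_factors n rs"
      using odd_chain_support Cons.prems by simp
    moreover have "(True, r) \<in># factor_mset n (w[s := False], m(s := m s - r))"
      using in_factor_mset[OF jn, of "w[s := False]" "m(s := m s - r)"] s w mj jn
      by (simp add: nth_list_update)
    ultimately show False
      using Cons.prems by (auto simp: chain_factors_def)
  qed
  ultimately have "(\<Sum>s<n. ?F s) = 1"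
    using jn by (simp add: sum.remove[of "{..<n}" j] sum.neutral)
  then show ?case
    by (simp add: odd_chain_Cons c e_act_apply)
qed

definition nonconst_evens :: "nat \<Rightarrow> bool list \<times> (nat \<Rightarrow> nat) \<Rightarrow> nat" where
  "nonconst_evens n x = size (filter_mset (\<lambda>u. \<not> fst u \<and> snd u \<noteq> 0) (factor_mset n x))"

definition leading_vector :: "nat \<Rightarrow> vec \<Rightarrow> bool list \<times> (nat \<Rightarrow> nat) \<Rightarrow> bool" where
  "leading_vector n g c \<longleftrightarrow> g \<in> gen_submod n (vone n) \<and> g c \<noteq> 0 \<and>
     (\<forall>x. factor_mset n x \<noteq> factor_mset n c \<and> nonconst_evens n c \<le> nonconst_evens n x \<longrightarrow> g x = 0)"

lemma nonconst_evens_zero: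
  assumes "nonconst_evens n (w, m) = 0" "s < n" "\<not> w ! s"
  shows "m s = 0"
proof (rule ccontr)
  assume "m s \<noteq> 0"
  then have "(w ! s, m s) \<in># filter_mset (\<lambda>u. \<not> fst u \<and> snd u \<noteq> 0) (factor_mset n (w, m))"
    using in_factor_mset[OF assms(2), of w m] assms(3) by simp
  then have "filter_mset (\<lambda>u. \<not> fst u \<and> snd u \<noteq> 0) (factor_mset n (w, m)) \<noteq> {#}"
    by (metis empty_iff set_mset_empty)
  then show False
    using assms(1) unfolding nonconst_evens_def by (metis size_eq_0_iff_empty)
qed

lemma nonconst_evens_update:
  assumes "s < n" "length w = n"
  shows "nonconst_evens n (w[s := b], m(s := e)) + (if \<not> w ! s \<and> m s \<noteq> 0 then 1 else 0)
       = nonconst_evens n (w, m) + (if \<not> b \<and> e \<noteq> 0 then 1 else 0)"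
proof -
  define rest where "rest = factor_mset n (w, m) - {#(w ! s, m s)#}"
  have "factor_mset n (w, m) = add_mset (w ! s, m s) rest"
    unfolding rest_def using in_factor_mset[OF assms(1), of w m] by simp
  moreover have "factor_mset n (w[s := b], m(s := e)) = add_mset (b, e) rest"
    unfolding rest_def by (rule factor_mset_update[OF assms])
  ultimately show ?thesis
    by (auto simp: nonconst_evens_def)
qed

lemma canonical_shapeD:
  assumes "canonical_shape n k (w, m)"
  shows "length w = n" "\<And>t. n \<le> t \<Longrightarrow> m t = 0" "\<And>s. s < n \<Longrightarrow> w ! s \<longleftrightarrow> s < k" "k \<le> n"
    "\<And>s t. s < t \<Longrightarrow> t < k \<Longrightarrow> m s \<noteq> m t"
    "\<And>s t. k \<le> s \<Longrightarrow> s \<le> t \<Longrightarrow> t < n \<Longrightarrow> m t \<le> m s"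
  using assms by (auto simp: canonical_shape_def basis_index_def)

lemma leading_vector_level_zero:
  assumes shape: "canonical_shape n k c" and level: "nonconst_evens n c = 0"
  shows "leading_vector n (odd_chain n (map (snd c) [0..<k])) c"
proof -
  obtain w m where c: "c = (w, m)"
    by (cases c)
  note S = canonical_shapeD[OF shape[unfolded c]]
  let ?rs = "map m [0..<k]"
  have distinct: "distinct ?rs"
    using S(5) by (auto simp: distinct_conv_nth) (metis nat_neq_iff)
  have len: "length ?rs \<le> n"
    using S(4) by simp
  have "w = fst (chain_index n 0 ?rs)"
    using S by (intro nth_equalityI) (auto simp: chain_index_def)
  moreover have "m = snd (chain_index n 0 ?rs)"
  proof
    fix s
    show "m s = snd (chain_index n 0 ?rs) s"
      using S(2,3) nonconst_evens_zero[OF level[unfolded c], of s]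
      by (cases "s < n") (auto simp: chain_index_def)
  qed
  ultimately have "c = chain_index n 0 ?rs"
    by (simp add: c prod_eq_iff)
  then have "odd_chain n ?rs c = 1"
    using odd_chain_at_chain_index[OF distinct, of 0 n] len by simp
  then show ?thesis
    using odd_chain_in_gen_submod odd_chain_support[OF len] odd_chain_support[OF len, of c]
    by (auto simp: leading_vector_def c)
qed

lemma VS_even_run_shift:
  assumes f: "f \<in> VS n" and len: "length w = n" and "s \<le> p" "p < n"
    and run: "\<And>t. s \<le> t \<Longrightarrow> t \<le> p \<Longrightarrow> \<not> w ! t \<and> m t = a"
  shows "f (w, m(s := 0)) = f (w, m(p := 0))"
  using assms(3,4) run
proof (induction s rule: inc_induct)
  case base
  then show ?case
    by simp
next
  case (step s)
  have sn: "Suc s < n"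
    using step by simp
  have "\<not> w ! s" "\<not> w ! Suc s" "m s = a" "m (Suc s) = a"
    using step.prems(2)[of s] step.prems(2)[of "Suc s"] step.hyps by auto
  then have "swap_letters s w = w" "swap_exps s (m(s := 0)) = m(Suc s := 0)" "flip_sign w s = 1"
    by (simp_all add: fun_eq_iff flip_sign_def) (metis list_update_id)
  then have "f (w, m(s := 0)) = f (w, m(Suc s := 0))"
    using VS_swap_invariant[OF f sn, of w "m(s := 0)"] by simp
  also have "\<dots> = f (w, m(p := 0))"
    using step.prems by (intro step.IH) auto
  finally show ?case .
qed

lemma last_nonconst_even_exists:
  assumes shape: "canonical_shape n k (w, m)" and level: "nonconst_evens n (w, m) \<noteq> 0"
  obtains p where "k \<le> p" "p < n" "m p \<noteq> 0" "\<And>t. p < t \<Longrightarrow> t < n \<Longrightarrow> m t = 0"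
proof -
  note S = canonical_shapeD[OF shape]
  define P where "P = {s. k \<le> s \<and> s < n \<and> m s \<noteq> 0}"
  obtain u where "u \<in># filter_mset (\<lambda>u. \<not> fst u \<and> snd u \<noteq> 0) (factor_mset n (w, m))"
    using level unfolding nonconst_evens_def by (metis multiset_nonemptyE size_empty)
  then obtain s where "s < n" "\<not> w ! s" "m s \<noteq> 0"
    by (auto elim: factor_msetE)
  then have "s \<in> P"
    using S(3) by (auto simp: P_def)
  moreover have "finite P"
    by (simp add: P_def)
  ultimately have "Max P \<in> P" "\<And>t. t \<in> P \<Longrightarrow> t \<le> Max P"
    by (auto intro: Max_in)
  then show thesis
    using that[of "Max P"] by (fastforce simp: P_def)
qed

context
  fixes n k p :: nat and w :: "bool list" and m :: "nat \<Rightarrow> nat"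
  assumes shape: "canonical_shape n k (w, m)"
    and p: "k \<le> p" "p < n" "m p \<noteq> 0" and after_p: "\<And>t. p < t \<Longrightarrow> t < n \<Longrightarrow> m t = 0"
begin

lemma update_last_even_letter: "w[p := False] = w"
  using canonical_shapeD(3)[OF shape p(2)] p(1) by (metis leD list_update_id)

lemma canonical_shape_drop_last: "canonical_shape n k (w, m(p := 0))"
  using canonical_shapeD[OF shape] p after_p unfolding canonical_shape_def basis_index_def
  by (auto simp: le_Suc_eq)

lemma nonconst_evens_drop_last: "nonconst_evens n (w, m(p := 0)) + 1 = nonconst_evens n (w, m)"
proof -
  have "\<not> w ! p"
    using canonical_shapeD(3)[OF shape p(2)] p(1) by simp
  then show ?thesis
    using nonconst_evens_update[OF p(2) canonical_shapeD(1)[OF shape], of False m 0] p(3)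
      update_last_even_letter by simp
qed

context
  fixes g :: vec
  assumes g: "leading_vector n g (w, m(p := 0))"
begin

lemma raise_summand_at_canonical:
  assumes s: "s < n"
  shows "e_summand n False False (m p) g w m s
    = (if k \<le> s \<and> m s = m p then g (w, m(p := 0)) else 0)"
proof (cases "k \<le> s \<and> m p \<le> m s")
  case True
  note S = canonical_shapeD[OF shape]
  have even: "\<not> w ! s"
    using S(3)[OF s] True by simp
  then have unchanged: "w[s := False] = w"
    by (metis list_update_id)
  then have summand: "e_summand n False False (m p) g w m s = g (w, m(s := m s - m p))"
    using True S(1) even by (simp add: e_summand_def)
  show ?thesis
  proof (cases "m s = m p")
    case True
    have "s \<le> p"
      using after_p[of s] s p(3) True by force
    moreover have "\<not> w ! t \<and> m t = m p" if "s \<le> t" "t \<le> p" for t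
      using S(3)[of t] S(6)[of s t] S(6)[of t p] that p \<open>k \<le> s \<and> m p \<le> m s\<close> True by auto
    moreover have "g \<in> VS n"
      using g gen_submod_subset_VS by (auto simp: leading_vector_def)
    ultimately have "g (w, m(s := 0)) = g (w, m(p := 0))"
      using S(1) p(2) by (intro VS_even_run_shift[where a="m p"])
    then show ?thesis
      using summand True \<open>k \<le> s \<and> m p \<le> m s\<close> by simp
  next
    case False
    \<comment> \<open>the source keeps a nonconstant even factor at \<open>s\<close>, so its level exceeds that of
      \<open>(w, m(p := 0))\<close>\<close>
    have "nonconst_evens n (w, m(s := m s - m p)) = nonconst_evens n (w, m)"
      using nonconst_evens_update[OF s S(1), of False m "m s - m p"] even unchanged False True p(3)
      by simp
    then have "nonconst_evens n (w, m(s := m s - m p)) = nonconst_evens n (w, m(p := 0)) + 1"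
      using nonconst_evens_drop_last by simp
    then have "factor_mset n (w, m(s := m s - m p)) \<noteq> factor_mset n (w, m(p := 0))"
      by (auto simp: nonconst_evens_def)
    then have "g (w, m(s := m s - m p)) = 0"
      using g \<open>nonconst_evens n (w, m(s := m s - m p)) = nonconst_evens n (w, m(p := 0)) + 1\<close>
      by (simp add: leading_vector_def)
    then show ?thesis
      using summand False by simp
  qed
next
  case False
  then show ?thesis
    using canonical_shapeD(3)[OF shape s] by (auto simp: e_summand_def)
qed

lemma raise_at_canonical: "e_act n False False (m p) g (w, m) \<noteq> 0"
proof -
  let ?S = "{s\<in>{..<n}. k \<le> s \<and> m s = m p}"
  have "e_act n False False (m p) g (w, m)
      = (\<Sum>s<n. if k \<le> s \<and> m s = m p then g (w, m(p := 0)) else 0)"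
    unfolding e_act_apply by (intro sum.cong) (auto simp: raise_summand_at_canonical)
  also have "\<dots> = of_nat (card ?S) * g (w, m(p := 0))"
    by (simp add: sum.inter_filter[symmetric])
  finally have "e_act n False False (m p) g (w, m) = of_nat (card ?S) * g (w, m(p := 0))" .
  moreover have "card ?S \<noteq> 0"
    using p by (auto simp: card_eq_0_iff)
  ultimately show ?thesis
    using g by (simp add: leading_vector_def)
qed

lemma raise_vanishes:
  assumes x: "factor_mset n x \<noteq> factor_mset n (w, m)" "nonconst_evens n (w, m) \<le> nonconst_evens n x"
  shows "e_act n False False (m p) g x = 0"
proof (rule ccontr)
  obtain wx mx where x_eq: "x = (wx, mx)"
    by (cases x)
  assume "e_act n False False (m p) g x \<noteq> 0"
  then obtain s where s: "s < n" "length wx = n" "\<not> wx ! s" "m p \<le> mx s"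
    and nz: "g (wx[s := False], mx(s := mx s - m p)) \<noteq> 0"
    unfolding x_eq by (auto elim: e_act_nonzeroE)
  have unchanged: "wx[s := False] = wx"
    using s(3) by (metis list_update_id)
  define src where "src = (wx, mx(s := mx s - m p))"
  have level: "nonconst_evens n src + (if mx s \<noteq> 0 then 1 else 0)
      = nonconst_evens n x + (if mx s - m p \<noteq> 0 then 1 else 0)"
    using nonconst_evens_update[OF s(1,2), of False mx "mx s - m p"] unchanged s(3)
    by (simp add: src_def x_eq)
  \<comment> \<open>the level of \<open>src\<close> is at least that of \<open>(w, m(p := 0))\<close>, so \<open>g\<close> can only be
    nonzero on its class\<close>
  have "nonconst_evens n (w, m(p := 0)) \<le> nonconst_evens n src"
    using level x(2) nonconst_evens_drop_last s(4) p(3) by (auto split: if_splits)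
  moreover have "g src \<noteq> 0"
    using nz unchanged by (simp add: src_def)
  ultimately have "factor_mset n src = factor_mset n (w, m(p := 0))"
    using g unfolding leading_vector_def by blast
  then have "nonconst_evens n src = nonconst_evens n (w, m(p := 0))"
    by (simp add: nonconst_evens_def)
  then have exp: "mx s = m p"
    using level x(2) nonconst_evens_drop_last s(4) p(3) by (auto split: if_splits)
  have "factor_mset n x = add_mset (False, m p) (factor_mset n src - {#(False, 0)#})"
    using factor_mset_update[OF s(1,2), of False mx 0] unchanged s(3) exp
      in_factor_mset[OF s(1), of wx mx]
    by (simp add: src_def x_eq)
  moreover have "factor_mset n (w, m)
      = add_mset (False, m p) (factor_mset n (w, m(p := 0)) - {#(False, 0)#})"
    using factor_mset_update[OF p(2) canonical_shapeD(1)[OF shape], of False m 0]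
      canonical_shapeD(3)[OF shape p(2)] p(1) in_factor_mset[OF p(2), of w m]
      update_last_even_letter
    by simp
  ultimately show False
    using x(1) \<open>factor_mset n src = factor_mset n (w, m(p := 0))\<close> by simp
qed

lemma leading_vector_raise: "leading_vector n (e_act n False False (m p) g) (w, m)"
  using raise_at_canonical raise_vanishes g gen_submod.act by (auto simp: leading_vector_def)

end

end

lemma leading_vector_exists:
  assumes "canonical_shape n k c"
  obtains g where "leading_vector n g c"
  using assms
proof (induction "nonconst_evens n c" arbitrary: c thesis)
  case 0
  then show ?case
    using leading_vector_level_zero by metis
next
  case (Suc q)
  obtain w m where c: "c = (w, m)"
    by (cases c)
  obtain p where p: "k \<le> p" "p < n" "m p \<noteq> 0" "\<And>t. p < t \<Longrightarrow> t < n \<Longrightarrow> m t = 0"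
    using last_nonconst_even_exists Suc.hyps(2) Suc.prems(2) unfolding c by (metis nat.distinct(1))
  note drop = canonical_shape_drop_last[OF Suc.prems(2)[unfolded c] p]
    nonconst_evens_drop_last[OF Suc.prems(2)[unfolded c] p]
  obtain g where "leading_vector n g (w, m(p := 0))"
    using Suc.hyps(1)[of "(w, m(p := 0))"] drop Suc.hyps(2) by (auto simp: c)
  then show ?case
    using leading_vector_raise[OF Suc.prems(2)[unfolded c] p] Suc.prems(1) by (auto simp: c)
qed

section \<open>Every symmetric vector lies in the generated submodule\<close>

definition top_classes :: "nat \<Rightarrow> vec \<Rightarrow> nat \<Rightarrow> (bool \<times> nat) multiset set" where
  "top_classes n f L = factor_mset n ` {x. f x \<noteq> 0 \<and> nonconst_evens n x = L}"

lemma nonconst_evens_le: "nonconst_evens n x \<le> n"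
proof -
  have "nonconst_evens n x \<le> size (factor_mset n x)"
    unfolding nonconst_evens_def by (rule size_filter_mset_lesseq)
  then show ?thesis
    by (simp add: factor_mset_def)
qed

lemma gen_submod_zero: "(\<lambda>_. 0) \<in> gen_submod n v"
  using gen_submod.smult[OF gen_submod.base, of 0] by simp

lemma eliminate_top_class:
  assumes f: "f \<in> VS n" and bound: "\<forall>x. f x \<noteq> 0 \<longrightarrow> nonconst_evens n x \<le> L" and x0: "f x0 \<noteq> 0"
  obtains f' where "f' \<in> VS n" "\<forall>x. f' x \<noteq> 0 \<longrightarrow> nonconst_evens n x \<le> L"
    "top_classes n f' L \<subseteq> top_classes n f L - {factor_mset n x0}"
    "f' \<in> gen_submod n (vone n) \<Longrightarrow> f \<in> gen_submod n (vone n)"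
proof -
  have "basis_index n x0"
    using f x0 by (auto simp: VS_def intro: Vsp_support_basis_index)
  obtain c where c: "basis_index n c" "sorted_index n c" "factor_mset n c = factor_mset n x0"
    using sorted_index_exists by blast
  have "f c \<noteq> 0"
    using VS_vanishes_on_factor_class[OF f c(1,2), of x0] \<open>basis_index n x0\<close> c(3) x0 by auto
  then obtain k where "canonical_shape n k c"
    using canonical_shape_of_sorted_support[OF f c(1,2)] by blast
  then obtain g where g: "leading_vector n g c"
    by (rule leading_vector_exists)
  then have g_mem: "g \<in> gen_submod n (vone n)" and "g c \<noteq> 0"
    by (simp_all add: leading_vector_def)
  define lam where "lam = f c / g c"
  define f' where "f' = (\<lambda>x. f x + (- lam) * g x)"
  have f'_VS: "f' \<in> VS n"
    unfolding f'_def using f g_mem gen_submod_subset_VS by (intro VS_add VS_smult) auto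
  have "f' c = 0"
    using \<open>g c \<noteq> 0\<close> by (simp add: f'_def lam_def)
  have f'_nz: "factor_mset n y \<noteq> factor_mset n c
      \<and> (nonconst_evens n c \<le> nonconst_evens n y \<longrightarrow> f y \<noteq> 0)"
    if "f' y \<noteq> 0" for y
  proof -
    have "basis_index n y"
      using f'_VS that by (auto simp: VS_def intro: Vsp_support_basis_index)
    then have "factor_mset n y \<noteq> factor_mset n c"
      using VS_vanishes_on_factor_class[OF f'_VS c(1,2) \<open>f' c = 0\<close>] that by blast
    moreover have "nonconst_evens n c \<le> nonconst_evens n y \<Longrightarrow> g y = 0"
      using g calculation unfolding leading_vector_def by blast
    ultimately show ?thesis
      using that by (auto simp: f'_def)
  qed
  have "nonconst_evens n x0 \<le> L"
    using bound x0 by blast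
  moreover have "nonconst_evens n c = nonconst_evens n x0"
    using c(3) by (simp add: nonconst_evens_def)
  ultimately have level_c: "nonconst_evens n c \<le> L"
    by simp
  show thesis
  proof
    show "f' \<in> VS n"
      by (rule f'_VS)
    show "\<forall>x. f' x \<noteq> 0 \<longrightarrow> nonconst_evens n x \<le> L"
    proof (intro allI impI)
      fix x
      assume "f' x \<noteq> 0"
      show "nonconst_evens n x \<le> L"
      proof (cases "nonconst_evens n c \<le> nonconst_evens n x")
        case True
        then have "f x \<noteq> 0"
          using f'_nz \<open>f' x \<noteq> 0\<close> by blast
        then show ?thesis
          using bound by blast
      next
        case False
        then show ?thesis
          using level_c by simp
      qed
    qed
    show "top_classes n f' L \<subseteq> top_classes n f L - {factor_mset n x0}"
    proof
      fix z
      assume "z \<in> top_classes n f' L"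
      then obtain y where y: "z = factor_mset n y" "f' y \<noteq> 0" "nonconst_evens n y = L"
        by (auto simp: top_classes_def)
      then show "z \<in> top_classes n f L - {factor_mset n x0}"
        using f'_nz[OF y(2)] level_c c(3) by (auto simp: top_classes_def)
    qed
    assume "f' \<in> gen_submod n (vone n)"
    then have "(\<lambda>x. f' x + lam * g x) \<in> gen_submod n (vone n)"
      by (intro gen_submod.add gen_submod.smult g_mem)
    then show "f \<in> gen_submod n (vone n)"
      by (simp add: f'_def)
  qed
qed

lemma VS_subset_gen_submod_bounded:
  "f \<in> VS n \<Longrightarrow> \<forall>x. f x \<noteq> 0 \<longrightarrow> nonconst_evens n x \<le> L \<Longrightarrow> f \<in> gen_submod n (vone n)"
proof (induction L arbitrary: f rule: less_induct)
  case (less L)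
  show ?case
    using less.prems
  proof (induction "card (top_classes n f L)" arbitrary: f rule: less_induct)
    case less_card: less
    show ?case
    proof (cases "top_classes n f L = {}")
      case True
      have below: "\<forall>x. f x \<noteq> 0 \<longrightarrow> nonconst_evens n x < L"
      proof (intro allI impI)
        fix x
        assume "f x \<noteq> 0"
        then have "nonconst_evens n x \<noteq> L"
          using True unfolding top_classes_def by blast
        then show "nonconst_evens n x < L"
          using less_card.prems(2) \<open>f x \<noteq> 0\<close> le_neq_implies_less by blast
      qed
      show ?thesis
      proof (cases L)
        case 0
        then have "f = (\<lambda>_. 0)"
          using below by auto
        then show ?thesis
          by (simp add: gen_submod_zero)
      next
        case (Suc L')
        then show ?thesis
          using less.IH[of L' f] less_card.prems(1) below by (simp add: less_Suc_eq_le)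
      qed
    next
      case False
      then obtain x0 where x0: "f x0 \<noteq> 0" "nonconst_evens n x0 = L"
        by (auto simp: top_classes_def)
      obtain f' where f': "f' \<in> VS n" "\<forall>x. f' x \<noteq> 0 \<longrightarrow> nonconst_evens n x \<le> L"
        and sub: "top_classes n f' L \<subseteq> top_classes n f L - {factor_mset n x0}"
        and reduces: "f' \<in> gen_submod n (vone n) \<Longrightarrow> f \<in> gen_submod n (vone n)"
        using eliminate_top_class[OF less_card.prems x0(1)] by blast
      have "finite {x. f x \<noteq> 0}"
        using less_card.prems(1) by (simp add: VS_def Vsp_def)
      then have "finite (top_classes n f L)"
        by (simp add: top_classes_def)
      moreover have "factor_mset n x0 \<in> top_classes n f L"
        using x0 by (auto simp: top_classes_def)
      ultimately have "card (top_classes n f' L) < card (top_classes n f L)"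
        using sub by (intro psubset_card_mono) auto
      then show ?thesis
        using less_card.hyps f' reduces by blast
    qed
  qed
qed

theorem lemma3p10:
  fixes n :: nat
  shows "gen_submod n (vone n) = VS n"
proof
  show "gen_submod n (vone n) \<subseteq> VS n"
    by (rule gen_submod_subset_VS)
  show "VS n \<subseteq> gen_submod n (vone n)"
    using VS_subset_gen_submod_bounded[of _ n n] nonconst_evens_le by blast
qed

end
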